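(* Let $m\in\mathbb{N}$, $\gamma_k,\gamma_j>0$. Suppose $r_k$ and $r_j$ are observed ($r_k\neq r_j$) and $i_k,i_j$ are unobserved, with $i_k=r_k-X_k$, $i_j=r_j-X_j$, where $X_k\sim\mathrm{Erlang}(m,\gamma_k)$ and $X_j\sim\mathrm{Erlang}(m,\gamma_j)$ are independent. Let $c_{kj}=\gamma_k/(\gamma_k+\gamma_j)$. Then, if $r_j<r_k$, $$\mathbb{E}[\tau_{kj}]=\sum_{l_1=0}^{m-1}P_{\gamma_k(r_k-r_j)}(l_1)\sum_{l_2=0}^{m-l_1-1}\binom{m+l_2-1}{l_2}c_{kj}^{l_2}(1-c_{kj})^{m}\,(m-l_1-l_2)\,\gamma_k^{-1},$$ and if $r_j>r_k$, $$\mathbb{E}[\tau_{kj}]=\sum_{l_1=0}^{m-1}P_{\gamma_j(r_j-r_k)}(l_1)\sum_{l_2=0}^{m-1}\binom{m-l_1-1+l_2}{l_2}c_{kj}^{l_2}(1-c_{kj})^{m-l_1}\,(m-l_2)\,\gamma_k^{-1}\;+\;F_{\gamma_j,m}(r_j-r_k)\,m\,\gamma_k^{-1}.$$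
   Context: Each individual $\ell$ has infection time $i_\ell$ and removal time $r_\ell$ with $X_\ell=r_\ell-i_\ell$. The infective time pressure is $\tau_{kj}:=\min(r_k,i_j)-\min(i_j,i_k)$; the expectation is over the unobserved infection times given the observed removal times. $\mathrm{Erlang}(m,\gamma)$ is the Gamma distribution with integer shape $m$ and rate $\gamma$. $P_\lambda(l)=e^{-\lambda}\lambda^l/l!$ is the Poisson$(\lambda)$ probability mass function, and $F_{\gamma,m}(x)=\Pr(\mathrm{Erlang}(m,\gamma)\le x)$. *)

theory Defs
  imports "HOL-Probability.Probability"
begin

definition poisson_prob :: "real \<Rightarrow> nat \<Rightarrow> real" where
  "poisson_prob lam l = exp (- lam) * lam ^ l / fact l"

definition tau :: "real \<Rightarrow> real \<Rightarrow> real \<Rightarrow> real" where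
  "tau rk ik ij = min rk ij - min ij ik"

end

theory Submission
  imports Defs
begin

(* Condition on X_j = y. As i_k <= r_k, the pressure is then (X_k - t)^+ with
   t = (y - (r_j - r_k))^+, and splitting the Erlang(m, gamma_k) density at t into
   Poisson-weighted shifted Erlang densities gives
   E (X_k - t)^+ = sum_{i<m} P_{gamma_k t}(i) (m - i) / gamma_k.
   It remains to integrate this against the Erlang(m, gamma_j) density of X_j. If r_j < r_k,
   then t = (r_k - r_j) + y and P_{gamma_k t} is the convolution of P_{gamma_k (r_k - r_j)} and
   P_{gamma_k y}. If r_j > r_k, the density of X_j is split at r_j - r_k in the same way, and
   the event X_j < r_j - r_k, where t = 0, contributes the Erlang CDF term. What is left are
   Gamma mixtures of Poisson laws, i.e. the negative binomial weights C(n - 1 + l, l) c^l (1 - c)^n. *)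

lemma sum_atMost_triangle_swap:
  fixes g :: "nat \<Rightarrow> nat \<Rightarrow> 'a :: comm_monoid_add"
  shows "(\<Sum>i\<le>n. \<Sum>l\<le>i. g l (i - l)) = (\<Sum>l\<le>n. \<Sum>j\<le>n - l. g l j)"
proof -
  have "(\<Sum>i\<le>n. \<Sum>l\<le>i. g l (i - l)) = (\<Sum>(l, j)\<in>{(l, j). l + j \<le> n}. g l j)"
    by (rule sum.triangle_reindex_eq[symmetric])
  also have "{(l, j). l + j \<le> n} = Sigma {..n} (\<lambda>l. {..n - l})"
    by auto
  finally show ?thesis
    by (simp add: sum.Sigma)
qed

lemma has_bochner_integral_lborel_shift:
  fixes f :: "real \<Rightarrow> 'a :: {banach, second_countable_topology}"
  assumes "has_bochner_integral lborel f I"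
  shows "has_bochner_integral lborel (\<lambda>x. f (x - d)) I"
  using assms lborel_has_bochner_integral_real_affine_iff[of 1 f I "- d"] by simp

lemma (in pair_sigma_finite) has_bochner_integral_iterated_nonneg:
  fixes h :: "'a \<times> 'b \<Rightarrow> real"
  assumes [measurable]: "h \<in> borel_measurable (M1 \<Otimes>\<^sub>M M2)" and h_nonneg: "\<And>p. 0 \<le> h p"
    and inner: "\<And>y. has_bochner_integral M1 (\<lambda>x. h (x, y)) (I y)"
    and outer: "has_bochner_integral M2 I V"
  shows "has_bochner_integral (M1 \<Otimes>\<^sub>M M2) h V"
proof -
  have I_nonneg: "0 \<le> I y" for y
    using has_bochner_integral_integral_eq[OF inner, symmetric] h_nonneg by simp
  have "(\<integral>\<^sup>+x. h (x, y) \<partial>M1) = ennreal (I y)" for y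
    using inner[of y] h_nonneg by (simp add: has_bochner_integral_iff nn_integral_eq_integral)
  moreover have "(\<integral>\<^sup>+y. I y \<partial>M2) = ennreal V"
    using outer I_nonneg by (simp add: has_bochner_integral_iff nn_integral_eq_integral)
  ultimately have "(\<integral>\<^sup>+p. h p \<partial>(M1 \<Otimes>\<^sub>M M2)) = ennreal V"
    by (simp add: nn_integral_snd[symmetric])
  moreover have "0 \<le> V"
    using has_bochner_integral_integral_eq[OF outer, symmetric] I_nonneg by simp
  ultimately show ?thesis
    using h_nonneg by (intro has_bochner_integral_nn_integral) auto
qed

lemma expectation_indep_densities_iterated:
  fixes X Y :: "'a \<Rightarrow> real" and f g :: "real \<Rightarrow> real" and h :: "real \<Rightarrow> real \<Rightarrow> real"
  assumes "prob_space M"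
    and X: "distributed M lborel X f" and Y: "distributed M lborel Y g"
    and indep: "prob_space.indep_var M borel X borel Y"
    and f_nonneg: "\<And>x. 0 \<le> f x" and g_nonneg: "\<And>y. 0 \<le> g y"
    and h_meas [measurable]: "case_prod h \<in> borel_measurable (lborel \<Otimes>\<^sub>M lborel)"
    and fh_nonneg: "\<And>x y. 0 \<le> f x * h x y"
    and inner: "\<And>y. has_bochner_integral lborel (\<lambda>x. f x * h x y) (I y)"
    and outer: "has_bochner_integral lborel (\<lambda>y. g y * I y) V"
  shows "prob_space.expectation M (\<lambda>\<omega>. h (X \<omega>) (Y \<omega>)) = V"
proof -
  interpret prob_space M by fact
  have lborel_pair: "pair_sigma_finite (lborel :: real measure) (lborel :: real measure)" ..
  have [measurable]: "f \<in> borel_measurable lborel" "g \<in> borel_measurable lborel"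
    using distributed_real_measurable[OF f_nonneg X] distributed_real_measurable[OF g_nonneg Y] by auto
  have "indep_var lborel X lborel Y"
    using indep_var_compose[OF indep, of id lborel id lborel] by (simp add: comp_def)
  then have "distributed M (lborel \<Otimes>\<^sub>M lborel) (\<lambda>\<omega>. (X \<omega>, Y \<omega>)) (\<lambda>(x, y). ennreal (f x) * ennreal (g y))"
    using distributed_joint_indep[OF _ _ X Y] by (simp add: lborel.sigma_finite_measure_axioms)
  moreover have "(\<lambda>(x, y). ennreal (f x) * ennreal (g y)) = (\<lambda>p. ennreal (f (fst p) * g (snd p)))"
    using f_nonneg g_nonneg by (auto simp: ennreal_mult)
  ultimately have joint: "distributed M (lborel \<Otimes>\<^sub>M lborel) (\<lambda>\<omega>. (X \<omega>, Y \<omega>))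
      (\<lambda>p. ennreal (f (fst p) * g (snd p)))"
    by simp
  have "expectation (\<lambda>\<omega>. h (X \<omega>) (Y \<omega>)) =
      (\<integral>p. f (fst p) * g (snd p) * h (fst p) (snd p) \<partial>(lborel \<Otimes>\<^sub>M lborel))"
    using distributed_integral[OF joint h_meas] f_nonneg g_nonneg by (simp add: case_prod_beta)
  also have "\<dots> = V"
  proof (intro has_bochner_integral_integral_eq
      pair_sigma_finite.has_bochner_integral_iterated_nonneg[OF lborel_pair])
    show "0 \<le> f (fst p) * g (snd p) * h (fst p) (snd p)" for p
      using mult_nonneg_nonneg[OF g_nonneg fh_nonneg, of "snd p" "fst p" "snd p"] by (simp add: mult_ac)
    show "has_bochner_integral lborel
        (\<lambda>x. f (fst (x, y)) * g (snd (x, y)) * h (fst (x, y)) (snd (x, y))) (g y * I y)" for y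
      using has_bochner_integral_mult_right[OF inner[of y], of "g y"] by (simp add: mult_ac)
  qed (use outer in simp_all)
  finally show ?thesis .
qed

lemma poisson_prob_add:
  "poisson_prob (a + b) n = (\<Sum>l\<le>n. poisson_prob a l * poisson_prob b (n - l))"
proof -
  have "poisson_prob (a + b) n = (\<Sum>l\<le>n. exp (- a) * exp (- b) * real (n choose l) * a ^ l * b ^ (n - l) / fact n)"
    by (simp add: poisson_prob_def binomial_ring exp_add[symmetric] sum_distrib_left sum_divide_distrib mult_ac)
  also have "\<dots> = (\<Sum>l\<le>n. poisson_prob a l * poisson_prob b (n - l))"
    by (intro sum.cong refl) (simp add: poisson_prob_def binomial_fact)
  finally show ?thesis .
qed

lemma has_bochner_integral_erlang_moment:
  assumes "0 < l"
  shows "has_bochner_integral lborel (\<lambda>x. erlang_density k l x * x ^ i) (fact (k + i) / (fact k * l ^ i))"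
proof (rule has_bochner_integral_nn_integral)
  show "(\<integral>\<^sup>+ x. ennreal (erlang_density k l x * x ^ i) \<partial>lborel) = ennreal (fact (k + i) / (fact k * l ^ i))"
    using nn_integral_erlang_ith_moment[OF assms] by simp
qed (use assms in \<open>auto simp: erlang_density_def\<close>)

lemma has_bochner_integral_erlang_CDF:
  assumes "0 < l"
  shows "has_bochner_integral lborel (\<lambda>y. indicator {..<d} y * erlang_density k l y) (erlang_CDF k l d)"
proof (rule has_bochner_integral_nn_integral)
  have "(\<integral>\<^sup>+ y. ennreal (indicator {..<d} y * erlang_density k l y) \<partial>lborel) =
      (\<integral>\<^sup>+ y. ennreal (erlang_density k l y) * indicator {..d} y \<partial>lborel)"
    by (rule nn_integral_cong_AE) (use AE_lborel_singleton[of d] in \<open>auto simp: indicator_def\<close>)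
  also have "\<dots> = ennreal (erlang_CDF k l d)"
    by (rule nn_integral_erlang_density[OF assms])
  finally show "(\<integral>\<^sup>+ y. ennreal (indicator {..<d} y * erlang_density k l y) \<partial>lborel) = ennreal (erlang_CDF k l d)" .
qed (use assms in auto)

(* Condition on the number i of arrivals before d of the Poisson process whose (k + 1)-st
   arrival time has density erlang_density k l. *)
lemma erlang_density_split_at:
  fixes d y :: real
  assumes "0 \<le> d"
  shows "indicator {d..} y * erlang_density k l y =
    (\<Sum>i\<le>k. poisson_prob (l * d) i * erlang_density (k - i) l (y - d))"
proof (cases "y < d")
  case True
  then show ?thesis by (simp add: erlang_density_def)
next
  case False
  have "y ^ k = (\<Sum>i\<le>k. real (k choose i) * d ^ i * (y - d) ^ (k - i))"
    using binomial_ring[of d "y - d" k] by simp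
  moreover have "erlang_density k l y = l ^ Suc k * exp (- l * y) / fact k * y ^ k"
    using False assms by (simp add: erlang_density_def)
  ultimately have "erlang_density k l y =
      (\<Sum>i\<le>k. l ^ Suc k * exp (- l * y) / fact k * (real (k choose i) * d ^ i * (y - d) ^ (k - i)))"
    by (simp add: sum_distrib_left)
  also have "\<dots> = (\<Sum>i\<le>k. poisson_prob (l * d) i * erlang_density (k - i) l (y - d))"
  proof (intro sum.cong refl)
    fix i assume "i \<in> {..k}"
    then obtain j where k: "k = i + j" by (auto simp: le_iff_add)
    show "l ^ Suc k * exp (- l * y) / fact k * (real (k choose i) * d ^ i * (y - d) ^ (k - i)) =
      poisson_prob (l * d) i * erlang_density (k - i) l (y - d)"
      using False unfolding k
      by (simp add: erlang_density_def poisson_prob_def binomial_fact power_add power_mult_distrib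
          exp_add[symmetric] field_simps)
  qed
  finally show ?thesis using False by simp
qed

lemma erlang_density_mult_poisson_prob:
  fixes a l :: real
  assumes "0 < a" "0 < l"
  defines "c \<equiv> a / (a + l)"
  shows "erlang_density k l y * poisson_prob (a * y) n =
    real ((k + n) choose n) * c ^ n * (1 - c) ^ Suc k * erlang_density (k + n) (a + l) y"
proof (cases "y < 0")
  case True
  then show ?thesis by (simp add: erlang_density_def)
next
  case False
  define s where "s = a + l"
  have s: "s > 0" and c: "c = a / s" and c': "1 - c = l / s"
    using assms by (simp_all add: s_def c_def field_simps)
  have weights: "c ^ n * (1 - c) ^ Suc k * s ^ Suc (k + n) = a ^ n * l ^ Suc k"
    unfolding c' unfolding c using s by (simp add: power_divide power_add field_simps)
  have "exp (- s * y) = exp (- l * y) * exp (- a * y)"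
    by (simp add: s_def exp_add[symmetric] algebra_simps)
  then have "erlang_density k l y * poisson_prob (a * y) n =
      a ^ n * l ^ Suc k * (y ^ (k + n) * exp (- s * y)) / (fact k * fact n)"
    using False by (simp add: erlang_density_def poisson_prob_def power_add power_mult_distrib)
  also have "\<dots> = real ((k + n) choose n) * (c ^ n * (1 - c) ^ Suc k * s ^ Suc (k + n)) *
      (y ^ (k + n) * exp (- s * y)) / fact (k + n)"
    unfolding weights by (simp add: binomial_fact mult_ac)
  also have "\<dots> = real ((k + n) choose n) * c ^ n * (1 - c) ^ Suc k * erlang_density (k + n) s y"
    using False by (simp add: erlang_density_def mult_ac)
  finally show ?thesis
    by (simp add: s_def)
qed

lemma has_bochner_integral_erlang_poisson_mixture:
  fixes a l :: real
  assumes "0 < a" "0 < l"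
  defines "c \<equiv> a / (a + l)"
  shows "has_bochner_integral lborel (\<lambda>y. erlang_density k l y * poisson_prob (a * y) n)
    (real ((k + n) choose n) * c ^ n * (1 - c) ^ Suc k)"
  using has_bochner_integral_mult_right[OF has_bochner_integral_erlang_moment[of "a + l" "k + n" 0],
      of "real ((k + n) choose n) * c ^ n * (1 - c) ^ Suc k"] assms
  by (simp add: erlang_density_mult_poisson_prob)

definition erlang_excess :: "nat \<Rightarrow> real \<Rightarrow> real \<Rightarrow> real" where
  "erlang_excess k l t = (\<Sum>i\<le>k. poisson_prob (l * t) i * real (Suc k - i) / l)"

lemma erlang_excess_0 [simp]: "erlang_excess k l 0 = real (Suc k) / l"
proof -
  have "erlang_excess k l 0 = (\<Sum>i\<in>{0}. poisson_prob (l * 0) i * real (Suc k - i) / l)"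
    unfolding erlang_excess_def by (rule sum.mono_neutral_right) (auto simp: poisson_prob_def)
  then show ?thesis
    by (simp add: poisson_prob_def)
qed

lemma has_bochner_integral_erlang_excess:
  assumes l: "0 < l" and t: "0 \<le> t"
  shows "has_bochner_integral lborel (\<lambda>x. erlang_density k l x * max 0 (x - t)) (erlang_excess k l t)"
proof -
  have mean: "has_bochner_integral lborel (\<lambda>x. erlang_density j l (x - t) * (x - t)) (real (Suc j) / l)" for j
    using has_bochner_integral_lborel_shift[OF has_bochner_integral_erlang_moment[OF l, of j 1], of t]
    by simp
  have integrand: "(\<lambda>x. erlang_density k l x * max 0 (x - t)) =
      (\<lambda>x. \<Sum>i\<le>k. poisson_prob (l * t) i * (erlang_density (k - i) l (x - t) * (x - t)))"
  proof
    fix x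
    show "erlang_density k l x * max 0 (x - t) =
      (\<Sum>i\<le>k. poisson_prob (l * t) i * (erlang_density (k - i) l (x - t) * (x - t)))"
    proof (cases "x < t")
      case True
      then show ?thesis using t by (simp add: erlang_density_def)
    next
      case False
      then show ?thesis
        using erlang_density_split_at[OF t, of x k l] by (simp add: sum_distrib_left mult_ac)
    qed
  qed
  have mean_sum: "(\<Sum>i\<le>k. poisson_prob (l * t) i * (real (Suc (k - i)) / l)) = erlang_excess k l t"
    unfolding erlang_excess_def by (intro sum.cong refl) (simp add: Suc_diff_le)
  show ?thesis
    unfolding integrand mean_sum[symmetric]
    by (intro has_bochner_integral_sum has_bochner_integral_mult_right mean)
qed

lemma has_bochner_integral_erlang_excess_erlang_shift_nonpos:
  fixes a l d :: real
  assumes a: "0 < a" and l: "0 < l" and d: "d \<le> 0"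
  defines "c \<equiv> a / (a + l)"
  shows "has_bochner_integral lborel (\<lambda>y. erlang_density j l y * erlang_excess k a (max 0 (y - d)))
    (\<Sum>l1\<le>k. poisson_prob (a * - d) l1 *
       (\<Sum>l2\<le>k - l1. real ((j + l2) choose l2) * c ^ l2 * (1 - c) ^ Suc j * real (Suc k - l1 - l2) / a))"
proof -
  define w where "w l1 l2 = poisson_prob (a * - d) l1 * real (Suc k - l1 - l2) / a" for l1 l2
  define nb where "nb n = real ((j + n) choose n) * c ^ n * (1 - c) ^ Suc j" for n
  have "erlang_density j l y * erlang_excess k a (max 0 (y - d)) =
      erlang_density j l y * erlang_excess k a (- d + y)" for y
    using d by (cases "y < 0") (simp_all add: erlang_density_def)
  also have "\<dots> y = (\<Sum>i\<le>k. \<Sum>n\<le>i. w n (i - n) * (erlang_density j l y * poisson_prob (a * y) (i - n)))" for y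
    unfolding erlang_excess_def distrib_left poisson_prob_add sum_distrib_left sum_distrib_right
    by (intro sum.cong refl) (auto simp: w_def sum_distrib_left sum_divide_distrib mult_ac)
  finally have integrand: "(\<lambda>y. erlang_density j l y * erlang_excess k a (max 0 (y - d))) =
      (\<lambda>y. \<Sum>i\<le>k. \<Sum>n\<le>i. w n (i - n) * (erlang_density j l y * poisson_prob (a * y) (i - n)))"
    by (rule ext)
  have "has_bochner_integral lborel
      (\<lambda>y. \<Sum>i\<le>k. \<Sum>n\<le>i. w n (i - n) * (erlang_density j l y * poisson_prob (a * y) (i - n)))
      (\<Sum>i\<le>k. \<Sum>n\<le>i. w n (i - n) * nb (i - n))"
    unfolding nb_def c_def
    by (intro has_bochner_integral_sum has_bochner_integral_mult_right
        has_bochner_integral_erlang_poisson_mixture a l)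
  also have "(\<Sum>i\<le>k. \<Sum>n\<le>i. w n (i - n) * nb (i - n)) =
      (\<Sum>l1\<le>k. poisson_prob (a * - d) l1 *
       (\<Sum>l2\<le>k - l1. real ((j + l2) choose l2) * c ^ l2 * (1 - c) ^ Suc j * real (Suc k - l1 - l2) / a))"
    unfolding sum_atMost_triangle_swap[of "\<lambda>l1 l2. w l1 l2 * nb l2"]
    unfolding w_def nb_def sum_distrib_left
    by (intro sum.cong refl) (simp add: mult_ac)
  finally show ?thesis
    unfolding integrand .
qed

lemma has_bochner_integral_erlang_excess_erlang_shift_nonneg:
  fixes a l d :: real
  assumes a: "0 < a" and l: "0 < l" and d: "0 \<le> d"
  defines "c \<equiv> a / (a + l)"
  shows "has_bochner_integral lborel (\<lambda>y. erlang_density j l y * erlang_excess k a (max 0 (y - d)))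
    ((\<Sum>l1\<le>j. poisson_prob (l * d) l1 *
       (\<Sum>l2\<le>k. real ((j - l1 + l2) choose l2) * c ^ l2 * (1 - c) ^ (Suc j - l1) * real (Suc k - l2) / a))
     + erlang_CDF j l d * real (Suc k) / a)"
proof -
  define w where "w l1 l2 = poisson_prob (l * d) l1 * real (Suc k - l2) / a" for l1 l2
  have shifted: "has_bochner_integral lborel
      (\<lambda>y. erlang_density i l (y - d) * poisson_prob (a * (y - d)) n)
      (real ((i + n) choose n) * c ^ n * (1 - c) ^ Suc i)" for i n
    unfolding c_def
    by (rule has_bochner_integral_lborel_shift[OF has_bochner_integral_erlang_poisson_mixture[OF a l]])
  have "erlang_density j l y * erlang_excess k a (max 0 (y - d)) =
      (\<Sum>l1\<le>j. \<Sum>l2\<le>k. w l1 l2 * (erlang_density (j - l1) l (y - d) * poisson_prob (a * (y - d)) l2))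
      + indicator {..<d} y * erlang_density j l y * (real (Suc k) / a)" for y
  proof (cases "y < d")
    case True
    then show ?thesis by (simp add: erlang_density_def)
  next
    case False
    then have "erlang_density j l y = (\<Sum>l1\<le>j. poisson_prob (l * d) l1 * erlang_density (j - l1) l (y - d))"
      using erlang_density_split_at[OF d, of y j l] by simp
    then show ?thesis
      using False by (simp add: erlang_excess_def w_def sum_product mult_ac)
  qed
  moreover have "has_bochner_integral lborel
      (\<lambda>y. (\<Sum>l1\<le>j. \<Sum>l2\<le>k. w l1 l2 * (erlang_density (j - l1) l (y - d) * poisson_prob (a * (y - d)) l2))
        + indicator {..<d} y * erlang_density j l y * (real (Suc k) / a))
      ((\<Sum>l1\<le>j. \<Sum>l2\<le>k. w l1 l2 * (real ((j - l1 + l2) choose l2) * c ^ l2 * (1 - c) ^ Suc (j - l1)))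
        + erlang_CDF j l d * (real (Suc k) / a))"
    by (intro has_bochner_integral_add has_bochner_integral_sum has_bochner_integral_mult_right
        has_bochner_integral_mult_left has_bochner_integral_erlang_CDF l shifted)
  moreover have "(\<Sum>l1\<le>j. \<Sum>l2\<le>k. w l1 l2 * (real ((j - l1 + l2) choose l2) * c ^ l2 * (1 - c) ^ Suc (j - l1))) =
      (\<Sum>l1\<le>j. poisson_prob (l * d) l1 *
       (\<Sum>l2\<le>k. real ((j - l1 + l2) choose l2) * c ^ l2 * (1 - c) ^ (Suc j - l1) * real (Suc k - l2) / a))"
    unfolding w_def sum_distrib_left
    by (intro sum.cong refl) (simp add: Suc_diff_le mult_ac)
  ultimately show ?thesis
    by simp
qed

lemma erlang_density_mult_tau:
  "erlang_density k l x * tau rk (rk - x) (rj - y) =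
    erlang_density k l x * max 0 (x - max 0 (y - (rj - rk)))"
  by (cases "x < 0") (simp_all add: erlang_density_def tau_def min_def max_def)

lemma has_bochner_integral_erlang_tau:
  assumes "0 < l"
  shows "has_bochner_integral lborel (\<lambda>x. erlang_density k l x * tau rk (rk - x) (rj - y))
    (erlang_excess k l (max 0 (y - (rj - rk))))"
  unfolding erlang_density_mult_tau using assms by (intro has_bochner_integral_erlang_excess) auto

lemma expectation_tau_erlang:
  fixes Xk Xj :: "'a \<Rightarrow> real" and g :: "real \<Rightarrow> real"
  assumes "prob_space M" and "0 < \<gamma>k"
    and "distributed M lborel Xk (erlang_density k \<gamma>k)" and "distributed M lborel Xj g"
    and "\<And>y. 0 \<le> g y"
    and "prob_space.indep_var M borel Xk borel Xj"
    and "has_bochner_integral lborel (\<lambda>y. g y * erlang_excess k \<gamma>k (max 0 (y - (rj - rk)))) V"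
  shows "prob_space.expectation M (\<lambda>\<omega>. tau rk (rk - Xk \<omega>) (rj - Xj \<omega>)) = V"
proof (rule expectation_indep_densities_iterated[where f = "erlang_density k \<gamma>k" and g = g
      and h = "\<lambda>x y. tau rk (rk - x) (rj - y)" and I = "\<lambda>y. erlang_excess k \<gamma>k (max 0 (y - (rj - rk)))"])
  show "(\<lambda>(x, y). tau rk (rk - x) (rj - y)) \<in> borel_measurable (lborel \<Otimes>\<^sub>M lborel)"
    unfolding tau_def by measurable
  show "0 \<le> erlang_density k \<gamma>k x * tau rk (rk - x) (rj - y)" for x y
    using \<open>0 < \<gamma>k\<close> by (simp add: erlang_density_mult_tau)
  show "has_bochner_integral lborel (\<lambda>x. erlang_density k \<gamma>k x * tau rk (rk - x) (rj - y))
      (erlang_excess k \<gamma>k (max 0 (y - (rj - rk))))" for y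
    using \<open>0 < \<gamma>k\<close> by (rule has_bochner_integral_erlang_tau)
qed (use assms in simp_all)

theorem mainTheorem6:
  fixes M :: "'a measure" and Xk Xj :: "'a \<Rightarrow> real"
    and m :: nat and \<gamma>k \<gamma>j rk rj :: real
  assumes "prob_space M"
    and "m \<ge> 1"
    and "\<gamma>k > 0" and "\<gamma>j > 0"
    and "rk \<noteq> rj"
    and "distributed M lborel Xk (erlang_density (m - 1) \<gamma>k)"
    and "distributed M lborel Xj (erlang_density (m - 1) \<gamma>j)"
    and "prob_space.indep_var M borel Xk borel Xj"
  defines "c \<equiv> \<gamma>k / (\<gamma>k + \<gamma>j)"
  shows "(rj < rk \<longrightarrow>
           prob_space.expectation M (\<lambda>\<omega>. tau rk (rk - Xk \<omega>) (rj - Xj \<omega>)) =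
             (\<Sum>l1=0..m-1. poisson_prob (\<gamma>k * (rk - rj)) l1 *
               (\<Sum>l2=0..m-l1-1. real ((m + l2 - 1) choose l2) * c ^ l2 * (1 - c) ^ m
                  * real (m - l1 - l2) / \<gamma>k)))
       \<and> (rj > rk \<longrightarrow>
           prob_space.expectation M (\<lambda>\<omega>. tau rk (rk - Xk \<omega>) (rj - Xj \<omega>)) =
             (\<Sum>l1=0..m-1. poisson_prob (\<gamma>j * (rj - rk)) l1 *
               (\<Sum>l2=0..m-1. real ((m - l1 - 1 + l2) choose l2) * c ^ l2 * (1 - c) ^ (m - l1)
                  * real (m - l2) / \<gamma>k))
             + erlang_CDF (m - 1) \<gamma>j (rj - rk) * real m / \<gamma>k)"
proof -
  obtain k where m: "m = Suc k"
    using \<open>m \<ge> 1\<close> by (cases m) auto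
  have expectation_eq: "prob_space.expectation M (\<lambda>\<omega>. tau rk (rk - Xk \<omega>) (rj - Xj \<omega>)) = V"
    if "has_bochner_integral lborel
      (\<lambda>y. erlang_density k \<gamma>j y * erlang_excess k \<gamma>k (max 0 (y - (rj - rk)))) V" for V
    using expectation_tau_erlang[OF assms(1,3) _ _ _ assms(8) that] assms(4,6,7) by (simp add: m)
  show ?thesis
    using expectation_eq[OF has_bochner_integral_erlang_excess_erlang_shift_nonpos[OF assms(3,4)]]
      expectation_eq[OF has_bochner_integral_erlang_excess_erlang_shift_nonneg[OF assms(3,4)]]
    by (simp add: m c_def atLeast0AtMost)
qed

end
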